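(* Let $a\in\mathbb N$ and let $\mathfrak o$ be a compact discrete valuation ring with residue field cardinality $q$; put $t=q^{-s}$. Let $V_{1,a}(\mathfrak o)$ be the $\mathfrak o$-representation of the star quiver $\mathsf S_a$ in which every vertex is represented by $\mathfrak o$ and every arrow by the identity map. Then $$\zeta_{V_{1,a}(\mathfrak o)}(s)=\frac{C_{a-1}(t,t)}{\prod_{i=1}^{a}(1-t^i)}.$$
   Context: The star quiver $\mathsf S_a$ has vertices $v_1,\dots,v_a$ and $a-1$ arrows $v_1\to v_j$ ($j=2,\dots,a$). For a representation $V=(\mathcal L_\iota,f_\phi)$, a subrepresentation is a tuple of submodules $\Lambda_\iota\le\mathcal L_\iota$ with $f_\phi(\Lambda_{\mathrm{tail}(\phi)})\subseteq\Lambda_{\mathrm{head}(\phi)}$, and $\zeta_V(s)=\sum_{V'}\prod_\iota|\mathcal L_\iota:\Lambda_\iota|^{-s}$ over finite-index subrepresentations. Carlitz' $q$-Eulerian polynomial is $C_{m}(x,y)=\sum_{w\in S_{m}}x^{\mathrm{des}(w)}y^{\mathrm{maj}(w)}$, where for $w\in S_m$, $\mathrm{des}(w)=|\{i\in[m-1]:w(i)>w(i+1)\}|$ and $\mathrm{maj}(w)=\sum_{i: w(i)>w(i+1)}i$ (with $C_0=1$). *)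

theory Defs
  imports "HOL-Analysis.Analysis" "HOL-Combinatorics.Permutations"
begin

section \<open>Ideals (= o-submodules of the regular module o)\<close>

definition is_ideal :: "'a::comm_ring_1 set \<Rightarrow> bool" where
  "is_ideal I \<longleftrightarrow> 0 \<in> I \<and> (\<forall>x\<in>I. \<forall>y\<in>I. x + y \<in> I) \<and> (\<forall>r. \<forall>x\<in>I. r * x \<in> I)"

definition principal_ideal :: "'a::comm_ring_1 \<Rightarrow> 'a set" where
  "principal_ideal g = {r * g | r. True}"

definition maximal_ideal :: "'a::comm_ring_1 set \<Rightarrow> bool" where
  "maximal_ideal M \<longleftrightarrow> is_ideal M \<and> M \<noteq> UNIV \<and>
     (\<forall>J. is_ideal J \<and> M \<subseteq> J \<longrightarrow> J = M \<or> J = UNIV)"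

definition is_dvr :: "'a::idom itself \<Rightarrow> bool" where
  "is_dvr _ \<longleftrightarrow> (\<forall>I::'a set. is_ideal I \<longrightarrow> (\<exists>g. I = principal_ideal g))
      \<and> (\<exists>!M::'a set. maximal_ideal M)
      \<and> (\<exists>x::'a. x \<noteq> 0 \<and> \<not> x dvd 1)"

definition max_ideal :: "'a::comm_ring_1 set" where
  "max_ideal = (THE M. maximal_ideal M)"

definition cosets :: "'a::comm_ring_1 set \<Rightarrow> 'a set set" where
  "cosets I = (\<lambda>x. (\<lambda>y. x + y) ` I) ` UNIV"

definition index :: "'a::comm_ring_1 set \<Rightarrow> nat" where
  "index I = card (cosets I)"

definition finite_index :: "'a::comm_ring_1 set \<Rightarrow> bool" where
  "finite_index I \<longleftrightarrow> finite (cosets I)"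

definition residue_card :: "'a::comm_ring_1 itself \<Rightarrow> nat" where
  "residue_card _ = index (max_ideal :: 'a set)"

definition madic_open :: "'a::comm_ring_1 set \<Rightarrow> bool" where
  "madic_open S \<longleftrightarrow> (\<forall>x\<in>S. \<exists>n g. max_ideal = principal_ideal g \<and>
       (\<lambda>y. x + y) ` principal_ideal (g ^ n) \<subseteq> S)"

definition madic_compact :: "'a::comm_ring_1 itself \<Rightarrow> bool" where
  "madic_compact _ \<longleftrightarrow> (\<forall>\<U>::'a set set. (\<forall>U\<in>\<U>. madic_open U) \<and> \<Union>\<U> = UNIV \<longrightarrow>
       (\<exists>\<F>\<subseteq>\<U>. finite \<F> \<and> \<Union>\<F> = UNIV))"

text \<open>Arrows of the star quiver S_a, an arrow v_1 -> v_j encoded as the pair (1, j).\<close>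
definition star_arrows :: "nat \<Rightarrow> (nat \<times> nat) set" where
  "star_arrows a = {(1, j) | j. 2 \<le> j \<and> j \<le> a}"

text \<open>Finite-index subrepresentations of the representation of S_a with every vertex
  represented by o and arrow maps f; a subrepresentation is a tuple (indexed by 1..a,
  normalized to UNIV outside) of finite-index submodules.\<close>
definition star_subreps :: "nat \<Rightarrow> (nat \<times> nat \<Rightarrow> 'a::comm_ring_1 \<Rightarrow> 'a) \<Rightarrow> (nat \<Rightarrow> 'a set) set" where
  "star_subreps a f = {\<Lambda>. (\<forall>i\<in>{1..a}. is_ideal (\<Lambda> i) \<and> finite_index (\<Lambda> i))
       \<and> (\<forall>i. i \<notin> {1..a} \<longrightarrow> \<Lambda> i = UNIV)
       \<and> (\<forall>\<phi>\<in>star_arrows a. f \<phi> ` \<Lambda> (fst \<phi>) \<subseteq> \<Lambda> (snd \<phi>))}"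

definition zeta_term :: "nat \<Rightarrow> complex \<Rightarrow> (nat \<Rightarrow> 'a::comm_ring_1 set) \<Rightarrow> complex" where
  "zeta_term a s \<Lambda> = (\<Prod>i\<in>{1..a}. (of_nat (index (\<Lambda> i)) :: complex) powr (- s))"

definition descents :: "nat \<Rightarrow> (nat \<Rightarrow> nat) \<Rightarrow> nat set" where
  "descents m w = {i \<in> {1..<m}. w i > w (Suc i)}"

definition des :: "nat \<Rightarrow> (nat \<Rightarrow> nat) \<Rightarrow> nat" where
  "des m w = card (descents m w)"

definition maj :: "nat \<Rightarrow> (nat \<Rightarrow> nat) \<Rightarrow> nat" where
  "maj m w = \<Sum>(descents m w)"

definition carlitz :: "nat \<Rightarrow> complex \<Rightarrow> complex \<Rightarrow> complex" where
  "carlitz m x y = (\<Sum>w\<in>{w. w permutes {1..m}}. x ^ des m w * y ^ maj m w)"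

end

theory Submission
  imports Defs
begin

text \<open>Every finite-index ideal of \<open>o\<close> is a power \<open>m^n\<close> of the maximal ideal, of index \<open>q^n\<close>,
  and \<open>m^n \<subseteq> m^n'\<close> iff \<open>n' \<le> n\<close>. So subrepresentations correspond to exponent vectors
  \<open>(e_1, \<dots>, e_a)\<close> with \<open>e_j \<le> e_1\<close> at every leaf \<open>j\<close>, contributing \<open>t^(e_1 + \<dots> + e_a)\<close>.
  As in MacMahon's and Stanley's theory of P-partitions, the leaf exponents \<open>f\<close> are sorted
  decreasingly: \<open>f\<close> corresponds bijectively to its sorting permutation \<open>w \<in> S_(a-1)\<close> together
  with arbitrary gaps \<open>g_i \<in> \<nat>\<close> between consecutive sorted values, each descent of \<open>w\<close> forcing
  an extra drop by one; the centre adds a free excess \<open>k\<close> over the largest leaf. The weight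
  becomes \<open>k + \<Sum>(i + 1) g_i + maj w + des w\<close>, so the series factors into \<open>1 / (1 - t)\<close>, the
  Carlitz polynomial \<open>C_(a-1)(t, t)\<close> and the geometric series \<open>1 / (1 - t^(i+1))\<close>.\<close>

section \<open>Principal ideals and residue systems\<close>

lemma mem_principal_ideal_iff: "x \<in> principal_ideal g \<longleftrightarrow> g dvd x"
  by (auto simp: principal_ideal_def dvd_def mult.commute)

lemma is_ideal_principal_ideal: "is_ideal (principal_ideal g)"
  unfolding is_ideal_def by (auto simp: mem_principal_ideal_iff)

lemma principal_ideal_1 [simp]: "principal_ideal 1 = UNIV"
  by (auto simp: mem_principal_ideal_iff)

lemma principal_ideal_subset_iff: "principal_ideal a \<subseteq> principal_ideal b \<longleftrightarrow> b dvd a"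
  unfolding subset_iff mem_principal_ideal_iff by (meson dvd_refl dvd_trans)

lemma ideal_uminus: "is_ideal I \<Longrightarrow> x \<in> I \<Longrightarrow> - x \<in> I"
  unfolding is_ideal_def by (metis mult_minus1)

lemma coset_eq_iff:
  assumes I: "is_ideal I"
  shows "(\<lambda>y. x + y) ` I = (\<lambda>y. x' + y) ` I \<longleftrightarrow> x - x' \<in> I"
proof
  assume eq: "(\<lambda>y. x + y) ` I = (\<lambda>y. x' + y) ` I"
  have "x + 0 \<in> (\<lambda>y. x + y) ` I" using I by (auto simp: is_ideal_def)
  then obtain i where "i \<in> I" "x = x' + i" using eq by auto
  then show "x - x' \<in> I" by simp
next
  have shift: "(\<lambda>y. x + y) ` I \<subseteq> (\<lambda>y. x' + y) ` I" if "x - x' \<in> I" for x x'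
  proof
    fix z assume "z \<in> (\<lambda>y. x + y) ` I"
    then obtain i where i: "i \<in> I" "z = x + i" by auto
    then have "(x - x') + i \<in> I" using I that by (auto simp: is_ideal_def)
    then show "z \<in> (\<lambda>y. x' + y) ` I" using i by (auto intro: image_eqI[of _ _ "(x - x') + i"])
  qed
  assume "x - x' \<in> I"
  moreover from ideal_uminus[OF I this] have "x' - x \<in> I" by simp
  ultimately show "(\<lambda>y. x + y) ` I = (\<lambda>y. x' + y) ` I" using shift by blast
qed

definition residue_system :: "'a::comm_ring_1 set \<Rightarrow> 'a set \<Rightarrow> bool" where
  "residue_system R I \<longleftrightarrow> (\<forall>x. \<exists>r\<in>R. x - r \<in> I) \<and> (\<forall>r\<in>R. \<forall>r'\<in>R. r - r' \<in> I \<longrightarrow> r = r')"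

lemma residue_system_principal_ideal_iff:
  "residue_system R (principal_ideal g) \<longleftrightarrow>
     (\<forall>x. \<exists>r\<in>R. g dvd x - r) \<and> (\<forall>r\<in>R. \<forall>r'\<in>R. g dvd r - r' \<longrightarrow> r = r')"
  by (simp add: residue_system_def mem_principal_ideal_iff)

lemma bij_betw_residue_system_cosets:
  assumes I: "is_ideal I" and R: "residue_system R I"
  shows "bij_betw (\<lambda>r. (\<lambda>y. r + y) ` I) R (cosets I)"
proof (rule bij_betwI')
  fix r r' assume "r \<in> R" "r' \<in> R"
  then show "((\<lambda>y. r + y) ` I = (\<lambda>y. r' + y) ` I) = (r = r')"
    using R coset_eq_iff[OF I] by (auto simp: residue_system_def)
next
  fix C assume "C \<in> cosets I"
  then obtain x where C: "C = (\<lambda>y. x + y) ` I" by (auto simp: cosets_def)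
  obtain r where "r \<in> R" "x - r \<in> I" using R by (auto simp: residue_system_def)
  then show "\<exists>r\<in>R. C = (\<lambda>y. r + y) ` I" using coset_eq_iff[OF I] C by blast
qed (auto simp: cosets_def)

lemma index_residue_system:
  assumes "is_ideal I" "residue_system R I"
  shows "index I = card R" and "finite_index I \<longleftrightarrow> finite R"
  using bij_betw_residue_system_cosets[OF assms]
  by (auto simp: index_def finite_index_def bij_betw_same_card bij_betw_finite)

lemma residue_system_exists:
  assumes I: "is_ideal I"
  shows "\<exists>R. residue_system R I"
proof -
  define rep where "rep C = (SOME z. z \<in> C)" for C :: "'a set"
  have rep: "x - rep ((\<lambda>y. x + y) ` I) \<in> I" for x
  proof -
    have "x + 0 \<in> (\<lambda>y. x + y) ` I" using I by (auto simp: is_ideal_def)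
    then have "rep ((\<lambda>y. x + y) ` I) \<in> (\<lambda>y. x + y) ` I"
      unfolding rep_def by (rule someI)
    then show ?thesis using ideal_uminus[OF I] by auto
  qed
  have "residue_system (rep ` cosets I) I"
    unfolding residue_system_def
  proof (intro conjI allI ballI impI)
    fix x show "\<exists>r\<in>rep ` cosets I. x - r \<in> I"
      using rep[of x] by (auto simp: cosets_def)
  next
    fix r r' assume "r \<in> rep ` cosets I" "r' \<in> rep ` cosets I" and rr': "r - r' \<in> I"
    then obtain x x' where r: "r = rep ((\<lambda>y. x + y) ` I)" and r': "r' = rep ((\<lambda>y. x' + y) ` I)"
      by (auto simp: cosets_def)
    have "x - x' = (x - r) + (r - r') - (x' - r')" by simp
    also have "\<dots> \<in> I"
      using rep[of x] rep[of x'] rr' I unfolding r r' is_ideal_def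
      by (metis diff_conv_add_uminus ideal_uminus[OF I])
    finally show "r = r'" using coset_eq_iff[OF I] r r' by metis
  qed
  then show ?thesis by blast
qed

lemma residue_system_power_Suc:
  fixes p :: "'a::idom"
  assumes p: "p \<noteq> 0"
    and R: "residue_system R (principal_ideal (p ^ n))"
    and S: "residue_system S (principal_ideal p)"
  shows "residue_system ((\<lambda>(r, s). r + p ^ n * s) ` (R \<times> S)) (principal_ideal (p ^ Suc n))"
    and "inj_on (\<lambda>(r, s). r + p ^ n * s) (R \<times> S)"
proof -
  have unique: "r = r' \<and> s = s'"
    if "r \<in> R" "r' \<in> R" "s \<in> S" "s' \<in> S"
      and d: "p ^ Suc n dvd (r + p ^ n * s) - (r' + p ^ n * s')" for r r' s s'
  proof -
    have expand: "(r + p ^ n * s) - (r' + p ^ n * s') = (r - r') + p ^ n * (s - s')"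
      by (simp add: algebra_simps)
    have "p ^ n dvd (r + p ^ n * s) - (r' + p ^ n * s')"
      using d by (rule dvd_trans[rotated]) (simp add: le_imp_power_dvd)
    then have "p ^ n dvd r - r'" unfolding expand by (metis dvd_add_left_iff dvd_triv_left)
    then have "r = r'" using R that by (auto simp: residue_system_principal_ideal_iff)
    with d have "p ^ n * p dvd p ^ n * (s - s')" by (simp add: algebra_simps)
    then have "p dvd s - s'" using p by simp
    then have "s = s'" using S that by (auto simp: residue_system_principal_ideal_iff)
    with \<open>r = r'\<close> show ?thesis ..
  qed
  show "inj_on (\<lambda>(r, s). r + p ^ n * s) (R \<times> S)"
    by (rule inj_onI) (use unique in auto)
  show "residue_system ((\<lambda>(r, s). r + p ^ n * s) ` (R \<times> S)) (principal_ideal (p ^ Suc n))"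
    unfolding residue_system_principal_ideal_iff
  proof (intro conjI allI ballI impI)
    fix x
    obtain r where r: "r \<in> R" "p ^ n dvd x - r"
      using R by (auto simp: residue_system_principal_ideal_iff)
    then obtain y where y: "x - r = p ^ n * y" by blast
    obtain s where s: "s \<in> S" "p dvd y - s"
      using S by (auto simp: residue_system_principal_ideal_iff)
    then obtain z where z: "y - s = p * z" by blast
    have "x - (r + p ^ n * s) = p ^ Suc n * z"
      using y z by (simp add: algebra_simps)
    then show "\<exists>v\<in>(\<lambda>(r, s). r + p ^ n * s) ` (R \<times> S). p ^ Suc n dvd x - v"
      using r s by force
  qed (use unique in auto)
qed

section \<open>Discrete valuation rings\<close>

lemma pid_no_strictly_ascending_chain:
  fixes h :: "nat \<Rightarrow> 'a::comm_ring_1 set"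
  assumes pid: "\<And>I::'a set. is_ideal I \<Longrightarrow> \<exists>g. I = principal_ideal g"
    and ideal: "\<And>n. is_ideal (h n)" and strict: "\<And>n. h n \<subset> h (Suc n)"
  shows False
proof -
  have mono: "mono h"
    using strict by (intro mono_iff_le_Suc[THEN iffD2]) (simp add: less_imp_le)
  have "is_ideal (\<Union>(range h))"
    unfolding is_ideal_def
  proof (intro conjI ballI allI)
    show "0 \<in> \<Union>(range h)" using ideal[of 0] by (auto simp: is_ideal_def)
  next
    fix x y assume "x \<in> \<Union>(range h)" "y \<in> \<Union>(range h)"
    then obtain i j where "x \<in> h i" "y \<in> h j" by blast
    then have "x \<in> h (max i j)" "y \<in> h (max i j)"
      using monoD[OF mono, of i "max i j"] monoD[OF mono, of j "max i j"] by auto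
    then show "x + y \<in> \<Union>(range h)" using ideal by (auto simp: is_ideal_def)
  next
    fix r x assume "x \<in> \<Union>(range h)"
    then obtain i where "x \<in> h i" by blast
    then have "r * x \<in> h i" using ideal[of i] by (simp add: is_ideal_def)
    then show "r * x \<in> \<Union>(range h)" by blast
  qed
  then obtain g where g: "\<Union>(range h) = principal_ideal g" using pid by blast
  then obtain k where "g \<in> h k" by (metis UN_E mem_principal_ideal_iff dvd_refl)
  then have "principal_ideal g \<subseteq> h k"
    using ideal[of k] by (auto simp: is_ideal_def principal_ideal_def)
  with g strict[of k] show False by blast
qed

lemma pid_ex_maximal_ideal_superset:
  fixes I :: "'a::comm_ring_1 set"
  assumes pid: "\<And>I::'a set. is_ideal I \<Longrightarrow> \<exists>g. I = principal_ideal g"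
    and I: "is_ideal I" "I \<noteq> UNIV"
  shows "\<exists>M. maximal_ideal M \<and> I \<subseteq> M"
proof (rule ccontr)
  assume none: "\<not> ?thesis"
  define proper where "proper J \<longleftrightarrow> is_ideal J \<and> J \<noteq> UNIV \<and> I \<subseteq> J" for J
  define enlarge where "enlarge J = (SOME J'. proper J' \<and> J \<subset> J')" for J
  have enlarge: "proper (enlarge J) \<and> J \<subset> enlarge J" if "proper J" for J
  proof -
    have "\<not> maximal_ideal J" using none that by (auto simp: proper_def)
    then have "\<exists>J'. proper J' \<and> J \<subset> J'"
      using that unfolding proper_def maximal_ideal_def by blast
    then show ?thesis unfolding enlarge_def by (rule someI_ex)
  qed
  have proper_iter: "proper ((enlarge ^^ n) I)" for n
    by (induction n) (use I enlarge in \<open>auto simp: proper_def\<close>)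
  show False
    by (rule pid_no_strictly_ascending_chain[OF pid, of "\<lambda>n. (enlarge ^^ n) I"])
       (use proper_iter enlarge in \<open>auto simp: proper_def\<close>)
qed

text \<open>The last assumption says that the ring is local with maximal ideal \<open>(p)\<close>.\<close>
locale uniformizer =
  fixes p :: "'a::idom"
  assumes pid: "\<And>I::'a set. is_ideal I \<Longrightarrow> \<exists>g. I = principal_ideal g"
    and nonzero: "p \<noteq> 0" and not_unit: "\<not> p dvd 1"
    and max_ideal_eq: "max_ideal = principal_ideal p"
    and dvd_nonunit: "\<And>y. \<not> y dvd 1 \<Longrightarrow> p dvd y"
begin

lemma power_dvd_power_iff: "p ^ m dvd p ^ n \<longleftrightarrow> m \<le> n"
proof
  assume dvd: "p ^ m dvd p ^ n"
  show "m \<le> n"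
  proof (rule ccontr)
    assume "\<not> m \<le> n"
    then have "p ^ n * p ^ (m - n) dvd p ^ n * 1" and "p dvd p ^ (m - n)"
      using dvd by (simp_all flip: power_add)
    then have "p dvd 1" using nonzero dvd_trans by (simp only: dvd_mult_cancel_left) simp
    then show False using not_unit by blast
  qed
qed (rule le_imp_power_dvd)

lemma power_ideal_subset_iff: "principal_ideal (p ^ m) \<subseteq> principal_ideal (p ^ n) \<longleftrightarrow> n \<le> m"
  by (simp add: principal_ideal_subset_iff power_dvd_power_iff)

lemma power_ideal_eq_iff: "principal_ideal (p ^ m) = principal_ideal (p ^ n) \<longleftrightarrow> m = n"
  by (metis power_ideal_subset_iff order_antisym order_refl)

lemma infinite_UNIV: "infinite (UNIV :: 'a set)"
proof -
  have "inj (\<lambda>n. p ^ n)"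
    by (rule injI) (metis power_dvd_power_iff dvd_refl order_antisym)
  then show ?thesis by (metis infinite_super subset_UNIV range_inj_infinite)
qed

text \<open>If \<open>p ^ n\<close> divided \<open>g\<close> for every \<open>n\<close>, the cofactors \<open>g / p ^ n\<close> would generate a
  strictly ascending chain of ideals.\<close>
lemma eq_power_times_unit:
  assumes g: "g \<noteq> 0"
  shows "\<exists>n u. u dvd 1 \<and> g = p ^ n * u"
proof (rule ccontr)
  assume no: "\<not> ?thesis"
  have "p ^ n dvd g" for n
  proof (induction n)
    case (Suc n)
    then obtain c where c: "g = p ^ n * c" by blast
    then have "p dvd c" using no dvd_nonunit by blast
    with c show ?case by (auto simp: mult.assoc)
  qed simp
  then have "\<forall>n. \<exists>c. g = p ^ n * c" by (auto simp: dvd_def)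
  then obtain c where c: "\<And>n. g = p ^ n * c n" by metis
  have c_Suc: "c n = p * c (Suc n)" for n
    using c[of n] c[of "Suc n"] nonzero by (simp add: mult.assoc)
  have c_nonzero: "c n \<noteq> 0" for n
    using c[of n] g by auto
  show False
  proof (rule pid_no_strictly_ascending_chain[OF pid, of "\<lambda>n. principal_ideal (c n)"])
    fix n
    have "\<not> p * c (Suc n) dvd 1 * c (Suc n)"
      using c_nonzero[of "Suc n"] not_unit by (simp only: dvd_mult_cancel_right) simp
    then have "principal_ideal (c n) \<subseteq> principal_ideal (c (Suc n))"
      and "\<not> principal_ideal (c (Suc n)) \<subseteq> principal_ideal (c n)"
      unfolding principal_ideal_subset_iff c_Suc[of n] by simp_all
    then show "principal_ideal (c n) \<subset> principal_ideal (c (Suc n))" by blast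
  qed (simp_all add: is_ideal_principal_ideal)
qed

lemma finite_index_ideal_eq_power:
  assumes I: "is_ideal I" "finite_index I"
  shows "\<exists>n. I = principal_ideal (p ^ n)"
proof -
  obtain g where g: "I = principal_ideal g" using pid I by blast
  have "g \<noteq> 0"
  proof
    assume "g = 0"
    then have "I = {0}" by (auto simp: g mem_principal_ideal_iff)
    then have "cosets I = range (\<lambda>x. {x})" by (simp add: cosets_def)
    then have "finite (range (\<lambda>x::'a. {x}))" using I(2) by (simp add: finite_index_def)
    then show False using infinite_UNIV by (auto dest: finite_imageD simp: inj_on_def)
  qed
  then obtain n u where u: "u dvd 1" "g = p ^ n * u" using eq_power_times_unit by blast
  then obtain v where "1 = u * v" by blast
  with u have "g dvd p ^ n" "p ^ n dvd g" by (auto simp: mult.assoc intro: dvdI[of _ _ v])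
  then have "principal_ideal g = principal_ideal (p ^ n)"
    by (simp add: principal_ideal_subset_iff subset_antisym)
  with g show ?thesis by blast
qed

text \<open>The cosets of \<open>(p)\<close> are \<open>m\<close>-adically open and disjoint, so a finite subcover must
  contain all of them.\<close>
lemma finite_residue_field:
  assumes "madic_compact TYPE('a)"
  shows "finite (cosets (principal_ideal p))"
proof -
  let ?M = "principal_ideal p"
  have I: "is_ideal ?M" by (rule is_ideal_principal_ideal)
  have open_coset: "madic_open ((\<lambda>y. c + y) ` ?M)" for c
    unfolding madic_open_def
  proof
    fix x assume "x \<in> (\<lambda>y. c + y) ` ?M"
    then have "x - c \<in> ?M" by auto
    then have "(\<lambda>y. x + y) ` ?M = (\<lambda>y. c + y) ` ?M" by (simp add: coset_eq_iff[OF I])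
    then show "\<exists>n g. max_ideal = principal_ideal g \<and> (\<lambda>y. x + y) ` principal_ideal (g ^ n) \<subseteq> (\<lambda>y. c + y) ` ?M"
      using max_ideal_eq by (intro exI[of _ 1] exI[of _ p]) simp
  qed
  have "x \<in> (\<lambda>y. x + y) ` ?M" for x
    by (rule image_eqI[of _ _ 0]) (auto simp: mem_principal_ideal_iff)
  then have "\<Union>(cosets ?M) = UNIV" by (auto simp: cosets_def)
  moreover have "\<forall>U\<in>cosets ?M. madic_open U" using open_coset by (auto simp: cosets_def)
  ultimately have "\<exists>F\<subseteq>cosets ?M. finite F \<and> \<Union>F = UNIV"
    using assms unfolding madic_compact_def by (simp only: simp_thms)
  then obtain F where F: "F \<subseteq> cosets ?M" "finite F" "\<Union>F = UNIV" by blast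
  have "cosets ?M \<subseteq> F"
  proof
    fix C assume "C \<in> cosets ?M"
    then obtain c where C: "C = (\<lambda>y. c + y) ` ?M" by (auto simp: cosets_def)
    obtain C' where C': "C' \<in> F" "c \<in> C'" using F(3) by (metis UNIV_I Union_iff)
    then have "C' \<in> cosets ?M" using F(1) by blast
    then obtain c' where C'_eq: "C' = (\<lambda>y. c' + y) ` ?M" by (auto simp: cosets_def)
    then obtain i where "i \<in> ?M" "c = c' + i" using C'(2) by blast
    then have "c - c' \<in> ?M" by simp
    then have "C = C'" unfolding C C'_eq by (simp add: coset_eq_iff[OF I])
    then show "C \<in> F" using C' by simp
  qed
  then show ?thesis using F(2) by (rule finite_subset)
qed

lemma index_ge_2:
  assumes "finite (cosets (principal_ideal p))"
  shows "index (principal_ideal p) \<ge> 2"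
proof -
  let ?M = "principal_ideal p"
  let ?C0 = "(\<lambda>y. 0 + y) ` ?M" and ?C1 = "(\<lambda>y. 1 + y) ` ?M"
  have "?C0 \<noteq> ?C1"
    unfolding coset_eq_iff[OF is_ideal_principal_ideal] using not_unit
    by (simp add: mem_principal_ideal_iff)
  moreover have "card {?C0, ?C1} \<le> card (cosets ?M)"
    using assms by (rule card_mono) (unfold cosets_def, blast)
  ultimately show ?thesis by (simp add: index_def)
qed

lemma index_power_ideal:
  assumes "finite (cosets (principal_ideal p))"
  shows "index (principal_ideal (p ^ n)) = index (principal_ideal p) ^ n"
    and "finite_index (principal_ideal (p ^ n))"
proof -
  obtain S where S: "residue_system S (principal_ideal p)"
    using residue_system_exists[OF is_ideal_principal_ideal] by blast
  have S_card: "index (principal_ideal p) = card S" and "finite S"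
    using index_residue_system[OF is_ideal_principal_ideal S] assms by (auto simp: finite_index_def)
  have "\<exists>R. residue_system R (principal_ideal (p ^ n)) \<and> finite R \<and> card R = card S ^ n"
  proof (induction n)
    case 0
    have "residue_system {0} (principal_ideal (p ^ 0))"
      by (simp add: residue_system_def)
    then show ?case by fastforce
  next
    case (Suc n)
    then obtain R where R: "residue_system R (principal_ideal (p ^ n))" "finite R" "card R = card S ^ n"
      by blast
    note digits = residue_system_power_Suc[OF nonzero R(1) S]
    show ?case
      using digits R(2,3) \<open>finite S\<close>
      by (intro exI[of _ "(\<lambda>(r, s). r + p ^ n * s) ` (R \<times> S)"])
         (simp add: card_image card_cartesian_product)
  qed
  then obtain R where R: "residue_system R (principal_ideal (p ^ n))" "finite R" "card R = card S ^ n"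
    by blast
  then show "index (principal_ideal (p ^ n)) = index (principal_ideal p) ^ n"
    and "finite_index (principal_ideal (p ^ n))"
    using index_residue_system[OF is_ideal_principal_ideal R(1)] S_card by simp_all
qed

end

lemma dvr_uniformizer_exists:
  assumes "is_dvr TYPE('a::idom)"
  shows "\<exists>p::'a. uniformizer p"
proof -
  have pid: "\<And>I::'a set. is_ideal I \<Longrightarrow> \<exists>g. I = principal_ideal g"
    and unique: "\<exists>!M::'a set. maximal_ideal M"
    and nonfield: "\<exists>x::'a. x \<noteq> 0 \<and> \<not> x dvd 1"
    using assms unfolding is_dvr_def by blast+
  have max: "maximal_ideal (max_ideal :: 'a set)"
    unfolding max_ideal_def by (rule theI'[OF unique])
  then have "is_ideal (max_ideal :: 'a set)" by (simp add: maximal_ideal_def)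
  then obtain p :: 'a where p: "max_ideal = principal_ideal p" using pid by blast
  have dvd_nonunit: "p dvd y" if "\<not> y dvd 1" for y
  proof -
    have "principal_ideal y \<noteq> UNIV"
      using that by (auto simp: mem_principal_ideal_iff)
    then obtain M where "maximal_ideal M" "principal_ideal y \<subseteq> M"
      using pid_ex_maximal_ideal_superset[OF pid is_ideal_principal_ideal] by blast
    moreover from \<open>maximal_ideal M\<close> have "M = max_ideal" using max unique by blast
    ultimately have "y \<in> max_ideal" by (auto simp: mem_principal_ideal_iff)
    then show ?thesis by (simp add: p mem_principal_ideal_iff)
  qed
  have "\<not> p dvd 1"
  proof
    assume "p dvd 1"
    then have "principal_ideal p = UNIV"
      by (auto simp: mem_principal_ideal_iff intro: dvd_trans[OF _ one_dvd])
    with max p show False by (simp add: maximal_ideal_def)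
  qed
  moreover have "p \<noteq> 0" using nonfield dvd_nonunit by auto
  ultimately have "uniformizer p"
    using pid p dvd_nonunit by unfold_locales auto
  then show ?thesis ..
qed

section \<open>Sorting permutations\<close>

text \<open>Ties are broken by position, so that at a descent of the sorting permutation the values
  drop strictly.\<close>
definition sorts_before :: "(nat \<Rightarrow> nat) \<Rightarrow> nat \<Rightarrow> nat \<Rightarrow> bool" where
  "sorts_before f x y \<longleftrightarrow> f y < f x \<or> (f x = f y \<and> x < y)"

definition sort_rank :: "nat \<Rightarrow> (nat \<Rightarrow> nat) \<Rightarrow> nat \<Rightarrow> nat" where
  "sort_rank m f x = (if x \<in> {1..m} then Suc (card {y\<in>{1..m}. sorts_before f y x}) else x)"

definition sort_perm :: "nat \<Rightarrow> (nat \<Rightarrow> nat) \<Rightarrow> nat \<Rightarrow> nat" where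
  "sort_perm m f = inv (sort_rank m f)"

lemma sorts_before_trans: "sorts_before f x y \<Longrightarrow> sorts_before f y z \<Longrightarrow> sorts_before f x z"
  and sorts_before_irrefl: "\<not> sorts_before f x x"
  and sorts_before_total: "x \<noteq> y \<Longrightarrow> sorts_before f x y \<or> sorts_before f y x"
  by (auto simp: sorts_before_def)

lemma sort_rank_less:
  assumes "x \<in> {1..m}" "y \<in> {1..m}" "sorts_before f x y"
  shows "sort_rank m f x < sort_rank m f y"
proof -
  have "{z\<in>{1..m}. sorts_before f z x} \<subset> {z\<in>{1..m}. sorts_before f z y}"
    using assms sorts_before_trans[of f _ x y] sorts_before_irrefl[of f x] by blast
  then have "card {z\<in>{1..m}. sorts_before f z x} < card {z\<in>{1..m}. sorts_before f z y}"
    by (rule psubset_card_mono[rotated]) simp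
  then show ?thesis using assms by (simp add: sort_rank_def)
qed

lemma sort_rank_in:
  assumes "x \<in> {1..m}"
  shows "sort_rank m f x \<in> {1..m}"
proof -
  have "card {y\<in>{1..m}. sorts_before f y x} \<le> card ({1..m} - {x})"
    using sorts_before_irrefl[of f x] by (intro card_mono) auto
  also have "\<dots> < m" using assms by simp
  finally show ?thesis using assms by (simp add: sort_rank_def)
qed

lemma sort_rank_permutes: "sort_rank m f permutes {1..m}"
proof (rule inj_imp_permutes)
  show "inj_on (sort_rank m f) {1..m}"
  proof (rule inj_onI, rule ccontr)
    fix x y assume "x \<in> {1..m}" "y \<in> {1..m}" "sort_rank m f x = sort_rank m f y" "x \<noteq> y"
    then show False
      using sorts_before_total[of x y f] sort_rank_less[of x m y f] sort_rank_less[of y m x f] by auto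
  qed
next
  show "sort_rank m f x \<in> {1..m}" if "x \<in> {1..m}" for x
    using that by (rule sort_rank_in)
qed (auto simp: sort_rank_def)

lemma sort_perm_permutes: "sort_perm m f permutes {1..m}"
  unfolding sort_perm_def by (rule permutes_inv[OF sort_rank_permutes])

lemma sort_perm_sorted:
  assumes "i \<in> {1..<m}"
  shows "sorts_before f (sort_perm m f i) (sort_perm m f (Suc i))"
proof -
  let ?w = "sort_perm m f"
  have in_range: "?w i \<in> {1..m}" "?w (Suc i) \<in> {1..m}"
    using assms permutes_in_image[OF sort_perm_permutes] by auto
  have ranks: "sort_rank m f (?w i) = i" "sort_rank m f (?w (Suc i)) = Suc i"
    using permutes_inverses(1)[OF sort_rank_permutes] by (simp_all add: sort_perm_def)
  then have "\<not> sorts_before f (?w (Suc i)) (?w i)" and "?w i \<noteq> ?w (Suc i)"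
    using sort_rank_less[OF in_range(2,1), of f] by auto
  then show ?thesis using sorts_before_total by blast
qed

text \<open>A permutation listing \<open>{1..m}\<close> in \<open>sorts_before\<close> order is the sorting permutation:
  along it the ranks increase strictly from at least \<open>1\<close> to at most \<open>m\<close>, so they are \<open>1, \<dots>, m\<close>.\<close>
lemma sort_perm_unique:
  assumes w: "w permutes {1..m}"
    and sorted: "\<And>i. i \<in> {1..<m} \<Longrightarrow> sorts_before f (w i) (w (Suc i))"
  shows "sort_perm m f = w"
proof -
  define r where "r i = sort_rank m f (w i)" for i
  have r_in: "r i \<in> {1..m}" if "i \<in> {1..m}" for i
    using permutes_in_image[OF w] sort_rank_in that by (auto simp: r_def)
  have r_grows: "r i + (j - i) \<le> r j" if "1 \<le> i" "i \<le> j" "j \<le> m" for i j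
    using that(2,3)
  proof (induction j rule: dec_induct)
    case (step n)
    have "r n < r (Suc n)"
      unfolding r_def using step that(1) sorted[of n] permutes_in_image[OF w]
      by (intro sort_rank_less) auto
    with step show ?case by simp
  qed simp
  have "r i = i" if "i \<in> {1..m}" for i
    using r_grows[of 1 i] r_grows[of i m] r_in[of 1] r_in[of m] that by auto
  then have sort_rank_w: "sort_rank m f (w i) = i" for i
    using permutes_not_in[OF w, of i] by (cases "i \<in> {1..m}") (auto simp: r_def sort_rank_def)
  show ?thesis
  proof
    fix i
    show "sort_perm m f i = w i"
      unfolding sort_perm_def permutes_inv_eq[OF sort_rank_permutes] by (rule sort_rank_w)
  qed
qed

text \<open>Stanley's encoding of a function \<open>f\<close> on \<open>{1..m}\<close> by its sorting permutation \<open>w\<close> and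
  the gaps \<open>g\<close>: \<open>f (w i)\<close> is the sum of \<open>g k + [k is a descent of w]\<close> over \<open>k \<ge> i\<close>.\<close>
definition level :: "nat \<Rightarrow> (nat \<Rightarrow> nat) \<Rightarrow> (nat \<Rightarrow> nat) \<Rightarrow> nat \<Rightarrow> nat" where
  "level m w g i = (if i \<in> {1..m} then \<Sum>k\<in>{i..m}. g k + of_bool (k \<in> descents m w) else 0)"

definition assemble :: "nat \<Rightarrow> (nat \<Rightarrow> nat) \<Rightarrow> (nat \<Rightarrow> nat) \<Rightarrow> nat \<Rightarrow> nat" where
  "assemble m w g j = (if j \<in> {1..m} then level m w g (inv w j) else 0)"

definition gaps :: "nat \<Rightarrow> (nat \<Rightarrow> nat) \<Rightarrow> (nat \<Rightarrow> nat) \<Rightarrow> nat \<Rightarrow> nat" where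
  "gaps m f w = restrict (\<lambda>i. f (w i) - f (w (Suc i)) - of_bool (i \<in> descents m w)) {1..m}"

lemma last_not_in_descents: "m \<notin> descents m w"
  by (simp add: descents_def)

lemma level_Suc:
  assumes "i \<in> {1..m}"
  shows "level m w g i = g i + of_bool (i \<in> descents m w) + level m w g (Suc i)"
proof (cases "i < m")
  case True
  with assms show ?thesis by (simp add: level_def sum.atLeast_Suc_atMost)
next
  case False
  with assms have "i = m" by simp
  then show ?thesis using assms by (simp add: level_def last_not_in_descents)
qed

lemma level_1: "level m w g 1 = (\<Sum>k\<in>{1..m}. g k + of_bool (k \<in> descents m w))"
  by (simp add: level_def)

lemma level_le_level_1: "level m w g i \<le> level m w g 1"
proof (cases "i \<in> {1..m}")
  case True
  then show ?thesis unfolding level_def by (simp, intro sum_mono2) auto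
qed (auto simp: level_def)

lemma assemble_perm:
  assumes w: "w permutes {1..m}" and i: "1 \<le> i" "i \<le> Suc m"
  shows "assemble m w g (w i) = level m w g i"
proof (cases "i = Suc m")
  case True
  then show ?thesis using permutes_not_in[OF w, of i] by (simp add: assemble_def level_def)
next
  case False
  with i have "i \<in> {1..m}" by simp
  then show ?thesis
    using permutes_in_image[OF w] permutes_inverses(2)[OF w] by (simp add: assemble_def)
qed

lemma sorts_before_assemble:
  assumes w: "w permutes {1..m}" and i: "i \<in> {1..<m}"
  shows "sorts_before (assemble m w g) (w i) (w (Suc i))"
proof -
  have i': "i \<in> {1..m}" using i by simp
  have "assemble m w g (w i) = level m w g i"
    and "assemble m w g (w (Suc i)) = level m w g (Suc i)"
    using i by (simp_all add: assemble_perm[OF w])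
  then have step: "assemble m w g (w i) = g i + of_bool (i \<in> descents m w) + assemble m w g (w (Suc i))"
    by (simp only: level_Suc[OF i'])
  show ?thesis
  proof (cases "i \<in> descents m w")
    case True
    then show ?thesis using step by (simp add: sorts_before_def)
  next
    case False
    have "w i \<noteq> w (Suc i)" using permutes_inj[OF w] by (metis inj_eq n_not_Suc_n)
    with False i have "w i < w (Suc i)" unfolding descents_def by simp
    then show ?thesis using step False by (cases "g i = 0") (simp_all add: sorts_before_def)
  qed
qed

lemma sort_perm_assemble:
  assumes "w permutes {1..m}"
  shows "sort_perm m (assemble m w g) = w"
  using assms by (rule sort_perm_unique) (rule sorts_before_assemble[OF assms])

lemma gaps_assemble:
  assumes w: "w permutes {1..m}" and g: "g \<in> PiE {1..m} (\<lambda>_. UNIV)"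
  shows "gaps m (assemble m w g) w = g"
proof
  fix i
  show "gaps m (assemble m w g) w i = g i"
  proof (cases "i \<in> {1..m}")
    case True
    then have "assemble m w g (w i) = level m w g i"
      and "assemble m w g (w (Suc i)) = level m w g (Suc i)"
      by (simp_all add: assemble_perm[OF w])
    then show ?thesis using True by (simp add: gaps_def level_Suc[OF True])
  next
    case False
    then show ?thesis by (auto simp: gaps_def PiE_arb[OF g False])
  qed
qed

lemma sort_perm_drop:
  assumes vanish: "\<And>j. j \<notin> {1..m} \<Longrightarrow> f j = 0" and n: "n \<in> {1..m}"
  shows "f (sort_perm m f (Suc n)) + of_bool (n \<in> descents m (sort_perm m f)) \<le> f (sort_perm m f n)"
proof (cases "n < m")
  case True
  then have "sorts_before f (sort_perm m f n) (sort_perm m f (Suc n))"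
    using n by (intro sort_perm_sorted) simp
  then show ?thesis by (auto simp: sorts_before_def descents_def)
next
  case False
  with n have "n = m" by simp
  moreover have "sort_perm m f (Suc m) = Suc m"
    by (rule permutes_not_in[OF sort_perm_permutes]) simp
  ultimately show ?thesis using vanish[of "Suc m"] by (simp add: last_not_in_descents)
qed

lemma level_gaps:
  assumes vanish: "\<And>j. j \<notin> {1..m} \<Longrightarrow> f j = 0" and n: "1 \<le> n" "n \<le> Suc m"
  shows "level m (sort_perm m f) (gaps m f (sort_perm m f)) n = f (sort_perm m f n)"
  using n(2)
proof (induction n rule: inc_induct)
  case base
  have "sort_perm m f (Suc m) = Suc m"
    by (rule permutes_not_in[OF sort_perm_permutes]) simp
  then show ?case using vanish[of "Suc m"] by (simp add: level_def)
next
  case (step k)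
  with n(1) have k: "k \<in> {1..m}" by simp
  have "f (sort_perm m f (Suc k)) + of_bool (k \<in> descents m (sort_perm m f)) \<le> f (sort_perm m f k)"
    using vanish k by (rule sort_perm_drop)
  then show ?case
    unfolding level_Suc[OF k] step.IH using k by (auto simp: gaps_def)
qed

lemma assemble_gaps:
  assumes vanish: "\<And>j. j \<notin> {1..m} \<Longrightarrow> f j = 0"
  shows "assemble m (sort_perm m f) (gaps m f (sort_perm m f)) = f"
proof
  fix j
  let ?w = "sort_perm m f"
  show "assemble m ?w (gaps m f ?w) j = f j"
  proof (cases "j \<in> {1..m}")
    case True
    then have "inv ?w j \<in> {1..m}"
      using permutes_in_image[OF permutes_inv[OF sort_perm_permutes]] by simp
    then have "level m ?w (gaps m f ?w) (inv ?w j) = f (?w (inv ?w j))"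
      using level_gaps[of m f "inv ?w j", OF vanish] by simp
    then show ?thesis
      using True permutes_inverses(1)[OF sort_perm_permutes] by (simp add: assemble_def)
  next
    case False
    then show ?thesis using vanish by (auto simp: assemble_def)
  qed
qed

lemma sum_tails: "(\<Sum>i\<in>{1..m}. \<Sum>k\<in>{i..m}. c k) = (\<Sum>k\<in>{1..m}. k * c k :: nat)"
proof (induction m)
  case (Suc m)
  have "(\<Sum>i\<in>{1..Suc m}. \<Sum>k\<in>{i..Suc m}. c k) = (\<Sum>i\<in>{1..m}. (\<Sum>k\<in>{i..m}. c k) + c (Suc m)) + c (Suc m)"
    by (simp add: sum.cl_ivl_Suc)
  also have "\<dots> = (\<Sum>k\<in>{1..m}. k * c k) + m * c (Suc m) + c (Suc m)"
    by (simp only: sum.distrib Suc.IH) simp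
  also have "\<dots> = (\<Sum>k\<in>{1..Suc m}. k * c k)"
    by simp
  finally show ?case .
qed simp

lemma sum_assemble:
  assumes w: "w permutes {1..m}"
  shows "(\<Sum>j\<in>{1..m}. assemble m w g j) = (\<Sum>k\<in>{1..m}. k * (g k + of_bool (k \<in> descents m w)))"
proof -
  have "(\<Sum>j\<in>{1..m}. assemble m w g j) = (\<Sum>i\<in>{1..m}. assemble m w g (w i))"
    using sum.permute[OF w, of "assemble m w g"] by (simp add: o_def)
  also have "\<dots> = (\<Sum>i\<in>{1..m}. \<Sum>k\<in>{i..m}. g k + of_bool (k \<in> descents m w))"
    by (intro sum.cong) (simp_all add: assemble_perm[OF w] level_def)
  finally show ?thesis by (simp only: sum_tails)
qed

lemma sum_descents: "(\<Sum>k\<in>{1..m}. Suc k * of_bool (k \<in> descents m w)) = maj m w + des m w"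
proof -
  have "(\<Sum>k\<in>{1..m}. Suc k * of_bool (k \<in> descents m w))
      = (\<Sum>k\<in>{1..m}. if k \<in> descents m w then Suc k else 0)"
    by (intro sum.cong) auto
  also have "\<dots> = (\<Sum>k\<in>{1..m} \<inter> descents m w. Suc k)"
    by (simp add: sum.inter_restrict)
  also have "{1..m} \<inter> descents m w = descents m w"
    by (auto simp: descents_def)
  also have "(\<Sum>k\<in>descents m w. Suc k) = maj m w + des m w"
    unfolding Suc_eq_plus1 sum.distrib by (simp add: maj_def des_def)
  finally show ?thesis .
qed

section \<open>Exponent vectors dominated by the centre\<close>

definition star_exponents :: "nat \<Rightarrow> (nat \<Rightarrow> nat) set" where
  "star_exponents m = {e. (\<forall>i. i \<notin> {1..Suc m} \<longrightarrow> e i = 0) \<and> (\<forall>j\<in>{2..Suc m}. e j \<le> e 1)}"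

definition leaf_exponents :: "nat \<Rightarrow> (nat \<Rightarrow> nat) \<Rightarrow> nat \<Rightarrow> nat" where
  "leaf_exponents m e j = (if j \<in> {1..m} then e (Suc j) else 0)"

text \<open>An exponent vector in \<open>star_exponents m\<close> is encoded by the excess \<open>k\<close> of the
  centre over the largest leaf, together with the Stanley encoding \<open>(w, g)\<close> of the leaves.\<close>
definition star_combine :: "nat \<Rightarrow> nat \<times> (nat \<Rightarrow> nat) \<times> (nat \<Rightarrow> nat) \<Rightarrow> nat \<Rightarrow> nat" where
  "star_combine m = (\<lambda>(k, w, g) i. if i = 1 then k + level m w g 1
      else if i \<in> {2..Suc m} then assemble m w g (i - 1) else 0)"

definition star_decompose :: "nat \<Rightarrow> (nat \<Rightarrow> nat) \<Rightarrow> nat \<times> (nat \<Rightarrow> nat) \<times> (nat \<Rightarrow> nat)" where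
  "star_decompose m e = (let f = leaf_exponents m e; w = sort_perm m f; g = gaps m f w
      in (e 1 - level m w g 1, w, g))"

lemma star_combine_in_star_exponents:
  assumes "w permutes {1..m}"
  shows "star_combine m (k, w, g) \<in> star_exponents m"
proof -
  have "assemble m w g j \<le> k + level m w g 1" for j
    using level_le_level_1[of m w g "inv w j"] by (simp add: assemble_def)
  then show ?thesis by (auto simp: star_exponents_def star_combine_def)
qed

lemma star_decompose_in:
  "star_decompose m e \<in> UNIV \<times> {w. w permutes {1..m}} \<times> PiE {1..m} (\<lambda>_. UNIV)"
  using sort_perm_permutes by (auto simp: star_decompose_def Let_def gaps_def)

lemma star_combine_star_decompose:
  assumes e: "e \<in> star_exponents m"
  shows "star_combine m (star_decompose m e) = e"
proof -
  define f where "f = leaf_exponents m e"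
  define w where "w = sort_perm m f"
  define g where "g = gaps m f w"
  have vanish: "\<And>j. j \<notin> {1..m} \<Longrightarrow> f j = 0" by (auto simp: f_def leaf_exponents_def)
  have decomposition: "star_decompose m e = (e 1 - level m w g 1, w, g)"
    by (simp add: star_decompose_def Let_def f_def w_def g_def)
  have reassemble: "assemble m w g = f"
    unfolding g_def w_def by (rule assemble_gaps[OF vanish])
  have "level m w g 1 = f (w 1)"
    unfolding g_def w_def using vanish by (rule level_gaps) simp_all
  also have "f (w 1) \<le> e 1"
    using e by (cases "w 1 \<in> {1..m}") (auto simp: f_def leaf_exponents_def star_exponents_def)
  finally have top: "level m w g 1 \<le> e 1" .
  show ?thesis
  proof
    fix i
    show "star_combine m (star_decompose m e) i = e i"
      using top e
      by (auto simp: decomposition star_combine_def reassemble f_def leaf_exponents_def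
          star_exponents_def)
  qed
qed

lemma star_decompose_star_combine:
  assumes w: "w permutes {1..m}" and g: "g \<in> PiE {1..m} (\<lambda>_. UNIV)"
  shows "star_decompose m (star_combine m (k, w, g)) = (k, w, g)"
proof -
  have "leaf_exponents m (star_combine m (k, w, g)) = assemble m w g"
    by (auto simp: leaf_exponents_def star_combine_def assemble_def)
  then show ?thesis
    by (simp add: star_decompose_def sort_perm_assemble[OF w] gaps_assemble[OF w g])
       (simp add: star_combine_def)
qed

lemma sum_star_combine:
  assumes w: "w permutes {1..m}"
  shows "(\<Sum>i\<in>{1..Suc m}. star_combine m (k, w, g) i)
    = k + (\<Sum>i\<in>{1..m}. Suc i * g i) + (maj m w + des m w)"
proof -
  let ?d = "\<lambda>i. of_bool (i \<in> descents m w) :: nat"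
  have leaves: "(\<Sum>j\<in>{1..m}. star_combine m (k, w, g) (Suc j)) = (\<Sum>j\<in>{1..m}. assemble m w g j)"
    by (intro sum.cong) (auto simp: star_combine_def)
  have "(\<Sum>i\<in>{1..Suc m}. star_combine m (k, w, g) i)
      = star_combine m (k, w, g) 1 + (\<Sum>i\<in>{Suc 1..Suc m}. star_combine m (k, w, g) i)"
    by (simp add: sum.atLeast_Suc_atMost)
  also have "\<dots> = k + level m w g 1 + (\<Sum>j\<in>{1..m}. assemble m w g j)"
    by (simp only: sum.shift_bounds_cl_Suc_ivl leaves) (simp add: star_combine_def)
  also have "\<dots> = k + (\<Sum>i\<in>{1..m}. g i + ?d i) + (\<Sum>i\<in>{1..m}. i * (g i + ?d i))"
    by (simp only: level_1 sum_assemble[OF w])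
  also have "\<dots> = k + (\<Sum>i\<in>{1..m}. Suc i * g i) + (\<Sum>i\<in>{1..m}. Suc i * ?d i)"
    by (simp add: sum.distrib[symmetric] algebra_simps)
  finally show ?thesis by (simp only: sum_descents)
qed

lemma has_sum_mult_abs:
  fixes f :: "'a \<Rightarrow> 'c::{real_normed_field, banach}" and g :: "'b \<Rightarrow> 'c"
  assumes f: "(f has_sum a) A" "(\<lambda>x. norm (f x)) summable_on A"
    and g: "(g has_sum b) B" "(\<lambda>y. norm (g y)) summable_on B"
  shows "((\<lambda>(x, y). f x * g y) has_sum a * b) (A \<times> B)"
    and "(\<lambda>p. norm (case p of (x, y) \<Rightarrow> f x * g y)) summable_on (A \<times> B)"
proof -
  have "((\<lambda>y. norm (f x) * norm (g y)) has_sum norm (f x) * infsum (\<lambda>y. norm (g y)) B) B" for x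
    using g(2) by (intro has_sum_cmult_right) simp
  then have "(\<lambda>(x, y). norm (f x) * norm (g y)) summable_on (A \<times> B)"
    using f(2)
    by (intro summable_on_SigmaI[where g = "\<lambda>x. norm (f x) * infsum (\<lambda>y. norm (g y)) B"])
       (auto intro: summable_on_cmult_left)
  then show abs: "(\<lambda>p. norm (case p of (x, y) \<Rightarrow> f x * g y)) summable_on (A \<times> B)"
    by (simp add: case_prod_unfold norm_mult)
  have inner: "((\<lambda>y. f x * g y) has_sum f x * b) B" for x
    by (rule has_sum_cmult_right[OF g(1)])
  show "((\<lambda>(x, y). f x * g y) has_sum a * b) (A \<times> B)"
    using inner abs_summable_summable[OF abs]
    by (intro has_sum_SigmaI[OF _ has_sum_cmult_left[OF f(1)]]) (simp_all add: case_prod_unfold)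
qed

lemma has_sum_prod_PiE_abs:
  fixes f :: "'a \<Rightarrow> 'b \<Rightarrow> 'c::{real_normed_field, banach}"
  assumes "finite A"
    and "\<And>x. x \<in> A \<Longrightarrow> (f x has_sum s x) (B x)"
    and "\<And>x. x \<in> A \<Longrightarrow> (\<lambda>y. norm (f x y)) summable_on (B x)"
  shows "((\<lambda>p. \<Prod>x\<in>A. f x (p x)) has_sum (\<Prod>x\<in>A. s x)) (PiE A B)
    \<and> (\<lambda>p. norm (\<Prod>x\<in>A. f x (p x))) summable_on (PiE A B)"
  using assms
proof (induction A rule: finite_induct)
  case empty
  then show ?case by (auto intro!: has_sum_finiteI)
next
  case (insert x F)
  let ?extend = "\<lambda>(p, y). p(x := y)"
  have PiE: "PiE (insert x F) B = ?extend ` (PiE F B \<times> B x)"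
    unfolding PiE_insert_eq by (subst swap_product [symmetric]) (simp add: image_image case_prod_unfold)
  have inj: "inj_on ?extend (PiE F B \<times> B x)"
    using \<open>x \<notin> F\<close> by (rule inj_combinator')
  have extend: "(\<lambda>p. \<Prod>x\<in>insert x F. f x (p x)) \<circ> ?extend = (\<lambda>(p, y). (\<Prod>x\<in>F. f x (p x)) * f x y)"
    using insert.hyps by (auto simp: fun_eq_iff mult.commute intro!: prod.cong)
  have IH: "((\<lambda>p. \<Prod>x\<in>F. f x (p x)) has_sum (\<Prod>x\<in>F. s x)) (PiE F B)"
    "(\<lambda>p. norm (\<Prod>x\<in>F. f x (p x))) summable_on (PiE F B)"
    using insert.IH insert.prems by auto
  note product = has_sum_mult_abs[OF IH insert.prems(1,2)[OF insertI1]]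
  have "((\<lambda>p. \<Prod>x\<in>insert x F. f x (p x)) has_sum (\<Prod>x\<in>insert x F. s x)) (PiE (insert x F) B)"
    unfolding PiE has_sum_reindex[OF inj] extend using product(1) insert.hyps by (simp add: mult.commute)
  moreover have "(\<lambda>p. norm (\<Prod>x\<in>insert x F. f x (p x))) summable_on (PiE (insert x F) B)"
  proof -
    have "(\<lambda>p. norm (\<Prod>x\<in>insert x F. f x (p x))) \<circ> ?extend
        = (\<lambda>z. norm ((\<lambda>(p, y). (\<Prod>x\<in>F. f x (p x)) * f x y) z))"
      unfolding extend[symmetric] by (simp add: o_def)
    then show ?thesis
      unfolding PiE summable_on_reindex[OF inj] using product(2) by (simp add: case_prod_unfold)
  qed
  ultimately show ?case ..
qed

lemma has_sum_geometric_abs: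
  fixes z :: "'a::{real_normed_field, banach}"
  assumes "norm z < 1"
  shows "((\<lambda>k. z ^ k) has_sum 1 / (1 - z)) UNIV" and "(\<lambda>k. norm (z ^ k)) summable_on UNIV"
proof -
  have "summable (\<lambda>k. norm (z ^ k))" using assms by (simp add: norm_power summable_geometric)
  then show "((\<lambda>k. z ^ k) has_sum 1 / (1 - z)) UNIV"
    and "(\<lambda>k. norm (z ^ k)) summable_on UNIV"
    using geometric_sums[OF assms] geometric_sums[of "norm z"] assms
    by (auto simp: norm_power intro!: norm_summable_imp_has_sum has_sum_imp_summable)
qed

lemma has_sum_excess_perm_gaps:
  fixes t :: complex
  assumes t: "norm t < 1"
  shows "((\<lambda>(k, w, g). t ^ k * (t ^ des m w * t ^ maj m w * (\<Prod>i\<in>{1..m}. (t ^ Suc i) ^ g i)))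
           has_sum carlitz m t t / (\<Prod>i\<in>{1..Suc m}. 1 - t ^ i))
         (UNIV \<times> {w. w permutes {1..m}} \<times> PiE {1..m} (\<lambda>_. UNIV))"
proof -
  have perms: "((\<lambda>w. t ^ des m w * t ^ maj m w) has_sum carlitz m t t) {w. w permutes {1..m}}"
    "(\<lambda>w. norm (t ^ des m w * t ^ maj m w)) summable_on {w. w permutes {1..m}}"
    using finite_permutations[of "{1..m}"] by (auto intro!: has_sum_finiteI simp: carlitz_def)
  have "norm (t ^ Suc i) < 1" for i
    unfolding norm_power using t by (simp add: power_less_one_iff del: power_Suc)
  note geometric = has_sum_geometric_abs[OF this]
  have gaps: "((\<lambda>g. \<Prod>i\<in>{1..m}. (t ^ Suc i) ^ g i) has_sum (\<Prod>i\<in>{1..m}. 1 / (1 - t ^ Suc i)))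
        (PiE {1..m} (\<lambda>_. UNIV))
      \<and> (\<lambda>g. norm (\<Prod>i\<in>{1..m}. (t ^ Suc i) ^ g i)) summable_on (PiE {1..m} (\<lambda>_. UNIV))"
    by (rule has_sum_prod_PiE_abs) (simp_all add: geometric del: power_Suc)
  have "(\<Prod>i\<in>{1..Suc m}. 1 - t ^ i) = (1 - t) * (\<Prod>i\<in>{Suc 1..Suc m}. 1 - t ^ i)"
    by (simp add: prod.atLeast_Suc_atMost)
  also have "(\<Prod>i\<in>{Suc 1..Suc m}. 1 - t ^ i) = (\<Prod>i\<in>{1..m}. 1 - t ^ Suc i)"
    by (rule prod.shift_bounds_cl_Suc_ivl)
  finally have factors: "1 / (1 - t) * (carlitz m t t * (\<Prod>i\<in>{1..m}. 1 / (1 - t ^ Suc i)))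
      = carlitz m t t / (\<Prod>i\<in>{1..Suc m}. 1 - t ^ i)"
    by (simp add: prod_dividef)
  note perms_gaps = has_sum_mult_abs[OF perms gaps[THEN conjunct1] gaps[THEN conjunct2]]
  show ?thesis
    using has_sum_mult_abs(1)[OF has_sum_geometric_abs[OF t] perms_gaps] factors
    by (simp add: case_prod_unfold)
qed

lemma has_sum_star_exponents:
  fixes t :: complex
  assumes t: "norm t < 1"
  shows "((\<lambda>e. t ^ (\<Sum>i\<in>{1..Suc m}. e i)) has_sum carlitz m t t / (\<Prod>i\<in>{1..Suc m}. 1 - t ^ i))
           (star_exponents m)"
proof -
  let ?weight = "\<lambda>(k, w, g). t ^ k * (t ^ des m w * t ^ maj m w * (\<Prod>i\<in>{1..m}. (t ^ Suc i) ^ g i))"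
  let ?codes = "(UNIV :: nat set) \<times> {w. w permutes {1..m}} \<times> PiE {1..m} (\<lambda>_. UNIV :: nat set)"
  have "(?weight has_sum carlitz m t t / (\<Prod>i\<in>{1..Suc m}. 1 - t ^ i)) ?codes \<longleftrightarrow> ?thesis"
  proof (rule has_sum_reindex_bij_witness[where i = "star_decompose m" and j = "star_combine m"])
    fix x assume "x \<in> ?codes"
    then obtain k w g where x: "x = (k, w, g)" and w: "w permutes {1..m}"
      and g: "g \<in> PiE {1..m} (\<lambda>_. UNIV)"
      by auto
    show "star_decompose m (star_combine m x) = x"
      unfolding x by (rule star_decompose_star_combine[OF w g])
    show "star_combine m x \<in> star_exponents m"
      unfolding x by (rule star_combine_in_star_exponents[OF w])
    have gap_weight: "t ^ (\<Sum>i\<in>{1..m}. Suc i * g i) = (\<Prod>i\<in>{1..m}. (t ^ Suc i) ^ g i)"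
      by (simp only: power_sum power_mult)
    show "t ^ (\<Sum>i\<in>{1..Suc m}. star_combine m x i) = ?weight x"
      unfolding x sum_star_combine[OF w] power_add gap_weight by (simp add: mult_ac)
  next
    fix e assume "e \<in> star_exponents m"
    then show "star_combine m (star_decompose m e) = e" by (rule star_combine_star_decompose)
    show "star_decompose m e \<in> ?codes" by (rule star_decompose_in)
  qed simp
  with has_sum_excess_perm_gaps[OF t] show ?thesis by blast
qed

section \<open>Subrepresentations of the star quiver\<close>

lemma of_nat_power_powr: "(of_nat (q ^ n) :: complex) powr z = (of_nat q powr z) ^ n"
proof (induction n)
  case (Suc n)
  have "(of_nat (q ^ Suc n) :: complex) powr z = (of_nat q * of_nat (q ^ n)) powr z" by simp
  also have "\<dots> = of_nat q powr z * of_nat (q ^ n) powr z" by (rule powr_times_real) auto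
  finally show ?case using Suc by simp
qed simp

context uniformizer
begin

lemma star_subreps_eq_power_ideals:
  assumes "finite (cosets (principal_ideal p))"
  shows "star_subreps (Suc m) (\<lambda>_. id) = (\<lambda>e i. principal_ideal (p ^ e i)) ` star_exponents m"
proof (intro set_eqI iffI)
  fix L :: "nat \<Rightarrow> 'a set" assume L: "L \<in> star_subreps (Suc m) (\<lambda>_. id)"
  then have "\<exists>n. L i = principal_ideal (p ^ n)" if "i \<in> {1..Suc m}" for i
    using that by (intro finite_index_ideal_eq_power) (auto simp: star_subreps_def)
  then obtain e where e: "\<And>i. i \<in> {1..Suc m} \<Longrightarrow> L i = principal_ideal (p ^ e i)" by metis
  define e' where "e' i = (if i \<in> {1..Suc m} then e i else 0)" for i
  have "L i = principal_ideal (p ^ e' i)" for i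
    using L e by (cases "i \<in> {1..Suc m}") (auto simp: star_subreps_def e'_def)
  then have L_eq: "L = (\<lambda>i. principal_ideal (p ^ e' i))" ..
  have "(1, j) \<in> star_arrows (Suc m)" if "j \<in> {2..Suc m}" for j
    using that by (auto simp: star_arrows_def)
  then have "L 1 \<subseteq> L j" if "j \<in> {2..Suc m}" for j
    using L that unfolding star_subreps_def by fastforce
  then have "e' \<in> star_exponents m"
    by (auto simp: star_exponents_def e'_def L_eq power_ideal_subset_iff)
  with L_eq show "L \<in> (\<lambda>e i. principal_ideal (p ^ e i)) ` star_exponents m" by blast
next
  fix L assume "L \<in> (\<lambda>e i. principal_ideal (p ^ e i)) ` star_exponents m"
  then obtain e where e: "e \<in> star_exponents m" and L: "L = (\<lambda>i. principal_ideal (p ^ e i))"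
    by blast
  then show "L \<in> star_subreps (Suc m) (\<lambda>_. id)"
    using index_power_ideal(2)[OF assms]
    by (auto simp: star_subreps_def star_exponents_def star_arrows_def is_ideal_principal_ideal
        power_ideal_subset_iff)
qed

lemma inj_on_power_ideals: "inj_on (\<lambda>e i. principal_ideal (p ^ e i)) A"
  by (rule inj_onI) (simp add: fun_eq_iff power_ideal_eq_iff)

lemma zeta_term_power_ideals:
  assumes "finite (cosets (principal_ideal p))"
  shows "zeta_term a s (\<lambda>i. principal_ideal (p ^ e i))
    = ((of_nat (index (principal_ideal p)) :: complex) powr - s) ^ (\<Sum>i\<in>{1..a}. e i)"
  by (simp add: zeta_term_def index_power_ideal(1)[OF assms] of_nat_power_powr power_sum
      del: of_nat_power)

lemma norm_index_powr_less_1: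
  assumes "finite (cosets (principal_ideal p))" and "Re s > 0"
  shows "norm ((of_nat (index (principal_ideal p)) :: complex) powr - s) < 1"
proof -
  let ?q = "index (principal_ideal p)"
  have "norm ((of_nat ?q :: complex) powr - s) = real ?q powr - Re s"
    by (subst norm_powr_real_powr) auto
  also have "\<dots> < real ?q powr 0"
    using index_ge_2[OF assms(1)] assms(2) by (intro powr_less_mono) auto
  finally show ?thesis using index_ge_2[OF assms(1)] by simp
qed

end

theorem proposition3p3:
  fixes a :: nat and s :: complex and q :: nat
  assumes "a \<ge> 1"
    and "is_dvr TYPE('o::idom)"
    and "madic_compact TYPE('o)"
    and "q = residue_card TYPE('o)"
    and "Re s > 0"
  shows "(zeta_term a s has_sum
           (let t = (of_nat q :: complex) powr (- s)
            in carlitz (a - 1) t t / (\<Prod>i\<in>{1..a}. (1 - t ^ i))))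
         (star_subreps a (\<lambda>_. id) :: (nat \<Rightarrow> 'o set) set)"
proof -
  obtain p :: 'o where "uniformizer p" using dvr_uniformizer_exists[OF assms(2)] ..
  then interpret uniformizer p .
  have finite: "finite (cosets (principal_ideal p))" by (rule finite_residue_field[OF assms(3)])
  have q: "q = index (principal_ideal p)" using assms(4) by (simp add: residue_card_def max_ideal_eq)
  define t where "t = (of_nat q :: complex) powr - s"
  obtain m where a: "a = Suc m" using assms(1) by (cases a) auto
  have "norm t < 1" unfolding t_def q by (rule norm_index_powr_less_1[OF finite assms(5)])
  then have "((\<lambda>e. t ^ (\<Sum>i\<in>{1..a}. e i)) has_sum carlitz m t t / (\<Prod>i\<in>{1..a}. 1 - t ^ i))
      (star_exponents m)"
    unfolding a by (rule has_sum_star_exponents)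
  then have "(zeta_term a s \<circ> (\<lambda>e i. principal_ideal (p ^ e i)) has_sum
      carlitz m t t / (\<Prod>i\<in>{1..a}. 1 - t ^ i)) (star_exponents m)"
    by (simp add: o_def zeta_term_power_ideals[OF finite] t_def q)
  then show ?thesis
    unfolding a star_subreps_eq_power_ideals[OF finite] has_sum_reindex[OF inj_on_power_ideals]
    by (simp add: t_def Let_def)
qed

end
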